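(* Let $\boldsymbol{\tau} \colon \mathsf{BPT} \to \mathbb K$ be a weighted troupe. For $n \geq 1$, let \[\omega_n = \sum_{T \in \mathsf{Branch}_n} \boldsymbol{\tau}(T)\quad\text{and}\quad\check{\omega}_n = \sum_{T \in \mathsf{BPT}_n} \boldsymbol{\tau}(T).\] Then, the generating functions \[\mathscr{B}(t) = \sum_{n \geq 1} \omega_n t^n\quad\text{and}\quad \mathscr T(t) = \sum_{n \geq 1} \check{\omega}_n t^n\] satisfy \[\mathscr T(t) = \mathscr B\left(\frac{t}{1 - t\mathscr T(t)}\right).\]
   Context: $\mathbb K$ is a commutative ring. $\mathsf{BPT}$ is the set of binary plane trees (rooted trees where each child is designated left or right, each vertex having at most one left and one right child), including the empty tree $\varnothing$; $\mathsf{BPT}_n$ is the set of those with $n$ vertices. A branch is a nonempty binary plane tree in which every vertex has at most one child; $\mathsf{Branch}_n$ is the set of branches with $n$ vertices. For nonempty binary plane trees $T_1,T_2$ and a vertex $v$ of $T_1$, the insertion $\nabla_v(T_1,T_2)$ is obtained by extending $v$ into a left edge (identifying $v$ with the bottom vertex and calling the new upper vertex $v^*$) and attaching $T_2$ as the right subtree of $v^*$. A weighted troupe is a function $\boldsymbol{\tau}\colon\mathsf{BPT}\to\mathbb K$ with $\boldsymbol{\tau}(\varnothing)=0$ and $\boldsymbol{\tau}(\nabla_v(T_1,T_2))=\boldsymbol{\tau}(T_1)\boldsymbol{\tau}(T_2)$ for all $T_1,T_2$ and all vertices $v\in T_1$ (here with a single color, i.e. trees are uncolored). *)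

theory Defs
  imports "HOL-Computational_Algebra.Formal_Power_Series"
begin

text \<open>Binary plane trees (uncolored). Leaf is the empty tree;
  Node L R is a root vertex with left subtree L and right subtree R.\<close>
datatype bpt = Leaf | Node bpt bpt

fun nverts :: "bpt \<Rightarrow> nat" where
  "nverts Leaf = 0"
| "nverts (Node L R) = Suc (nverts L + nverts R)"

fun chain :: "bpt \<Rightarrow> bool" where
  "chain Leaf = True"
| "chain (Node L R) = ((L = Leaf \<or> R = Leaf) \<and> chain L \<and> chain R)"

definition is_branch :: "bpt \<Rightarrow> bool" where
  "is_branch T \<longleftrightarrow> T \<noteq> Leaf \<and> chain T"

text \<open>insertions T1 T2 is the set of all trees nabla_v(T1,T2), v ranging over the
  vertices of T1: the subtree S rooted at v is replaced by Node S T2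
  (new vertex v* with left child v and right subtree T2).\<close>
fun insertions :: "bpt \<Rightarrow> bpt \<Rightarrow> bpt set" where
  "insertions Leaf T2 = {}"
| "insertions (Node L R) T2 =
     {Node (Node L R) T2}
     \<union> (\<lambda>X. Node X R) ` insertions L T2
     \<union> (\<lambda>X. Node L X) ` insertions R T2"

definition weighted_troupe :: "(bpt \<Rightarrow> 'a::comm_ring_1) \<Rightarrow> bool" where
  "weighted_troupe tau \<longleftrightarrow> tau Leaf = 0 \<and>
     (\<forall>T1 T2 T. T1 \<noteq> Leaf \<longrightarrow> T2 \<noteq> Leaf \<longrightarrow> T \<in> insertions T1 T2 \<longrightarrow>
        tau T = tau T1 * tau T2)"

definition omega :: "(bpt \<Rightarrow> 'a::comm_ring_1) \<Rightarrow> nat \<Rightarrow> 'a" where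
  "omega tau n = (\<Sum>T\<in>{T. is_branch T \<and> nverts T = n}. tau T)"

definition omega_check :: "(bpt \<Rightarrow> 'a::comm_ring_1) \<Rightarrow> nat \<Rightarrow> 'a" where
  "omega_check tau n = (\<Sum>T\<in>{T. nverts T = n}. tau T)"

definition branch_gf :: "(bpt \<Rightarrow> 'a::comm_ring_1) \<Rightarrow> 'a fps" where
  "branch_gf tau = Abs_fps (\<lambda>n. if n = 0 then 0 else omega tau n)"

definition tree_gf :: "(bpt \<Rightarrow> 'a::comm_ring_1) \<Rightarrow> 'a fps" where
  "tree_gf tau = Abs_fps (\<lambda>n. if n = 0 then 0 else omega_check tau n)"

text \<open>The multiplicative inverse of 1 - u for u with zero constant term,
  written as the geometric series sum_k u^k (valid over any commutative ring).\<close>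
definition one_minus_inv :: "'a::comm_ring_1 fps \<Rightarrow> 'a fps" where
  "one_minus_inv u = fps_compose (Abs_fps (\<lambda>_. 1)) u"

end

(* A tree whose root has two nonempty subtrees L and R is the insertion of R
   at the root of L, and the same holds at any vertex inside a larger tree.
   Undoing these insertions, always keeping the left subtree, turns a tree T
   into a branch prune T with tau T = tau (prune T) * pruned_weight tau T, where
   pruned_weight multiplies tau over the removed right subtrees.  Among the
   trees pruning to a fixed branch b, every vertex of b sits below an arbitrary
   finite stack of removed vertices, each carrying an arbitrary nonempty right
   subtree, so their weights have generating function (t / (1 - t T(t)))^|b|.
   Summing tau b times this over all branches b gives B(t / (1 - t T(t))). *)

theory Submission
  imports Defs
begin

unbundle fps_syntax

lemma one_minus_mult_one_minus_inv:
  fixes u :: "'a::comm_ring_1 fps"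
  assumes u0: "u $ 0 = 0"
  shows "(1 - u) * one_minus_inv u = 1"
proof (rule fps_ext)
  fix n
  define S where "S = (\<Sum>j<Suc n. u ^ j)"
  have agree: "one_minus_inv u $ k = S $ k" if "k \<le> n" for k
  proof -
    have "one_minus_inv u $ k = (\<Sum>j = 0..k. (u ^ j) $ k)"
      by (simp add: one_minus_inv_def fps_compose_nth)
    also have "\<dots> = (\<Sum>j = 0..n. (u ^ j) $ k)"
      using startsby_zero_sum_depends[OF u0 that] by simp
    also have "\<dots> = S $ k"
      unfolding S_def fps_sum_nth by (rule sum.cong) auto
    finally show ?thesis .
  qed
  have "((1 - u) * one_minus_inv u) $ n = ((1 - u) * S) $ n"
    unfolding fps_mult_nth by (rule sum.cong) (auto simp: agree)
  also have "\<dots> = (1 - u ^ Suc n) $ n"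
    unfolding S_def by (simp only: one_diff_power_eq)
  also have "\<dots> = 1 $ n"
    using startsby_zero_power_prefix[OF u0, rule_format, of n "Suc n"] by simp
  finally show "((1 - u) * one_minus_inv u) $ n = 1 $ n" .
qed

lemma nverts_eq_0_iff [simp]: "nverts T = 0 \<longleftrightarrow> T = Leaf"
  by (cases T) auto

lemma finite_nverts_le: "finite {T. nverts T \<le> n}"
proof (induction n)
  case 0
  then show ?case by simp
next
  case (Suc n)
  have "{T. nverts T \<le> Suc n} \<subseteq>
      insert Leaf (case_prod Node ` ({T. nverts T \<le> n} \<times> {T. nverts T \<le> n}))"
  proof
    fix T assume "T \<in> {T. nverts T \<le> Suc n}"
    then show "T \<in> insert Leaf (case_prod Node ` ({T. nverts T \<le> n} \<times> {T. nverts T \<le> n}))"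
      by (cases T) auto
  qed
  then show ?case
    using Suc by (meson finite_SigmaI finite_imageI finite_insert finite_subset)
qed

lemma finite_nverts_eq: "finite {T. nverts T = n}"
  by (rule finite_subset[OF _ finite_nverts_le[of n]]) auto

definition weight_gf :: "(bpt \<Rightarrow> 'a::comm_ring_1) \<Rightarrow> 'a fps" where
  "weight_gf w = Abs_fps (\<lambda>n. \<Sum>T | nverts T = n. w T)"

lemma weight_gf_nth [simp]: "weight_gf w $ n = (\<Sum>T | nverts T = n. w T)"
  by (simp add: weight_gf_def)

lemma weight_gf_add: "weight_gf (\<lambda>T. v T + w T) = weight_gf v + weight_gf w"
  by (rule fps_ext) (simp add: sum.distrib)

lemma weight_gf_Node:
  "weight_gf (\<lambda>T. case T of Leaf \<Rightarrow> 0 | Node L R \<Rightarrow> v L * w R) =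
     fps_X * (weight_gf v * weight_gf w)"
proof (rule fps_ext)
  fix n
  show "weight_gf (\<lambda>T. case T of Leaf \<Rightarrow> 0 | Node L R \<Rightarrow> v L * w R) $ n =
      (fps_X * (weight_gf v * weight_gf w)) $ n"
  proof (cases n)
    case 0
    then show ?thesis by simp
  next
    case (Suc m)
    define S where "S = (SIGMA i:{0..m}. {L. nverts L = i} \<times> {R. nverts R = m - i})"
    have trees: "{T. nverts T = Suc m} = (\<lambda>(i, L, R). Node L R) ` S"
    proof
      show "{T. nverts T = Suc m} \<subseteq> (\<lambda>(i, L, R). Node L R) ` S"
      proof
        fix T assume "T \<in> {T. nverts T = Suc m}"
        then show "T \<in> (\<lambda>(i, L, R). Node L R) ` S"
          by (cases T) (force simp: S_def image_iff)+
      qed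
    qed (auto simp: S_def)
    have "inj_on (\<lambda>(i, L, R). Node L R) S"
      by (auto simp: inj_on_def S_def)
    then have "(\<Sum>T | nverts T = Suc m. case T of Leaf \<Rightarrow> 0 | Node L R \<Rightarrow> v L * w R) =
        (\<Sum>i = 0..m. \<Sum>(L, R) \<in> {L. nverts L = i} \<times> {R. nverts R = m - i}. v L * w R)"
      by (simp add: trees sum.reindex sum.Sigma finite_nverts_eq S_def split_def)
    also have "\<dots> = (\<Sum>i = 0..m. weight_gf v $ i * weight_gf w $ (m - i))"
      by (simp add: sum_product sum.cartesian_product)
    also have "\<dots> = (weight_gf v * weight_gf w) $ m"
      by (simp only: fps_mult_nth)
    finally show ?thesis
      by (simp add: Suc fps_X_mult_nth)
  qed
qed

datatype ctx = Hole | In_left ctx bpt | In_right bpt ctx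

fun plug :: "ctx \<Rightarrow> bpt \<Rightarrow> bpt" where
  "plug Hole T = T"
| "plug (In_left c R) T = plug c (Node T R)"
| "plug (In_right L c) T = plug c (Node L T)"

lemma plug_eq_Leaf_iff: "plug c T = Leaf \<longleftrightarrow> c = Hole \<and> T = Leaf"
  by (induction c arbitrary: T) auto

lemma plug_in_insertions:
  "X \<in> insertions Y T2 \<Longrightarrow> plug c X \<in> insertions (plug c Y) T2"
  by (induction c arbitrary: X Y) auto

lemma Node_in_insertions: "S \<noteq> Leaf \<Longrightarrow> Node S T2 \<in> insertions S T2"
  by (cases S) auto

lemma weighted_troupe_plug_Node:
  assumes "weighted_troupe tau" "L \<noteq> Leaf" "R \<noteq> Leaf"
  shows "tau (plug c (Node L R)) = tau (plug c L) * tau R"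
proof -
  have "plug c (Node L R) \<in> insertions (plug c L) R"
    using assms by (intro plug_in_insertions Node_in_insertions)
  then show ?thesis
    using assms plug_eq_Leaf_iff[of c L] unfolding weighted_troupe_def by blast
qed

fun prune :: "bpt \<Rightarrow> bpt" where
  "prune Leaf = Leaf"
| "prune (Node L R) =
     (if L \<noteq> Leaf \<and> R \<noteq> Leaf then prune L else Node (prune L) (prune R))"

fun pruned_weight :: "(bpt \<Rightarrow> 'a::comm_ring_1) \<Rightarrow> bpt \<Rightarrow> 'a" where
  "pruned_weight tau Leaf = 1"
| "pruned_weight tau (Node L R) =
     (if L \<noteq> Leaf \<and> R \<noteq> Leaf then pruned_weight tau L * tau R
      else pruned_weight tau L * pruned_weight tau R)"

lemma chain_prune: "chain (prune T)"
  by (induction T) auto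

lemma nverts_prune_le: "nverts (prune T) \<le> nverts T"
  by (induction T) auto

lemma prune_eq_Leaf_iff [simp]: "prune T = Leaf \<longleftrightarrow> T = Leaf"
  by (induction T) auto

lemma weighted_troupe_plug_prune:
  assumes "weighted_troupe tau"
  shows "tau (plug c T) = tau (plug c (prune T)) * pruned_weight tau T"
proof (induction T arbitrary: c)
  case Leaf
  then show ?case by simp
next
  case (Node L R)
  show ?case
  proof (cases "L \<noteq> Leaf \<and> R \<noteq> Leaf")
    case True
    then have "tau (plug c (Node L R)) = tau (plug c L) * tau R"
      using assms by (simp add: weighted_troupe_plug_Node)
    then show ?thesis
      using Node.IH(1)[of c] True by (simp add: mult.assoc)
  next
    case False
    have "tau (plug c (Node L R)) = tau (plug (In_left c R) L)"
      by simp
    also have "\<dots> = tau (plug (In_left c R) (prune L)) * pruned_weight tau L"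
      by (rule Node.IH(1))
    also have "plug (In_left c R) (prune L) = plug (In_right (prune L) c) R"
      by simp
    also have "tau \<dots> = tau (plug (In_right (prune L) c) (prune R)) * pruned_weight tau R"
      by (rule Node.IH(2))
    finally show ?thesis
      using False by (auto simp: mult_ac)
  qed
qed

lemma weighted_troupe_prune:
  "weighted_troupe tau \<Longrightarrow> tau T = tau (prune T) * pruned_weight tau T"
  using weighted_troupe_plug_prune[of tau Hole T] by simp

definition fibre_weight :: "(bpt \<Rightarrow> 'a::comm_ring_1) \<Rightarrow> bpt \<Rightarrow> bpt \<Rightarrow> 'a" where
  "fibre_weight tau b T = (if prune T = b then pruned_weight tau T else 0)"

lemma weight_gf_fibre_weight_Leaf: "weight_gf (fibre_weight tau Leaf) = 1"
proof -
  have "fibre_weight tau Leaf = (\<lambda>T. if T = Leaf then 1 else 0)"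
    by (auto simp: fibre_weight_def)
  then show ?thesis
    by (intro fps_ext) (simp add: finite_nverts_eq)
qed

text \<open>The first summand accounts for trees whose root is removed by pruning,
  the second for those whose root becomes the root of the branch.\<close>

lemma fibre_weight_Node:
  assumes "b1 = Leaf \<or> b2 = Leaf" "tau Leaf = 0"
  shows "fibre_weight tau (Node b1 b2) = (\<lambda>T.
    (case T of Leaf \<Rightarrow> 0 | Node L R \<Rightarrow> fibre_weight tau (Node b1 b2) L * tau R) +
    (case T of Leaf \<Rightarrow> 0 | Node L R \<Rightarrow> fibre_weight tau b1 L * fibre_weight tau b2 R))"
  using assms by (auto simp: fun_eq_iff fibre_weight_def split: bpt.split)

lemma weight_gf_fibre_weight_Node:
  fixes tau :: "bpt \<Rightarrow> 'a::comm_ring_1"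
  assumes "b1 = Leaf \<or> b2 = Leaf" "tau Leaf = 0"
  shows "weight_gf (fibre_weight tau (Node b1 b2)) =
    fps_X * one_minus_inv (fps_X * weight_gf tau) *
    (weight_gf (fibre_weight tau b1) * weight_gf (fibre_weight tau b2))"
proof -
  define F where "F = weight_gf (fibre_weight tau (Node b1 b2))"
  define P where "P = weight_gf tau"
  define Q where "Q = weight_gf (fibre_weight tau b1) * weight_gf (fibre_weight tau b2)"
  have "F = fps_X * (F * P) + fps_X * Q"
    unfolding F_def P_def Q_def
    by (subst fibre_weight_Node[of b1 b2 tau, OF assms]) (simp only: weight_gf_add weight_gf_Node)
  then have recursion: "(1 - fps_X * P) * F = fps_X * Q"
    by (simp add: algebra_simps)
  define G where "G = one_minus_inv (fps_X * P)"
  have inverse: "(1 - fps_X * P) * G = 1"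
    unfolding G_def by (simp add: one_minus_mult_one_minus_inv)
  have "F = ((1 - fps_X * P) * G) * F"
    by (simp add: inverse)
  also have "\<dots> = G * ((1 - fps_X * P) * F)"
    by (simp only: mult_ac)
  also have "\<dots> = fps_X * G * Q"
    unfolding recursion by (simp only: mult_ac)
  finally show ?thesis
    unfolding F_def G_def P_def Q_def .
qed

lemma weight_gf_fibre_weight_chain:
  fixes tau :: "bpt \<Rightarrow> 'a::comm_ring_1"
  assumes "tau Leaf = 0" "chain b"
  shows "weight_gf (fibre_weight tau b) = (fps_X * one_minus_inv (fps_X * weight_gf tau)) ^ nverts b"
  using assms(2)
proof (induction b)
  case Leaf
  then show ?case by (simp add: weight_gf_fibre_weight_Leaf)
next
  case (Node b1 b2)
  then show ?case
    by (simp add: weight_gf_fibre_weight_Node assms(1) power_add algebra_simps)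
qed

lemma finite_branches_le: "finite {b. is_branch b \<and> nverts b \<le> n}"
  by (rule finite_subset[OF _ finite_nverts_le[of n]]) auto

lemma weighted_troupe_sum_fibre_weights:
  assumes "weighted_troupe tau" "nverts T \<le> n"
  shows "tau T = (\<Sum>b | is_branch b \<and> nverts b \<le> n. tau b * fibre_weight tau b T)"
proof -
  have "(\<Sum>b | is_branch b \<and> nverts b \<le> n. tau b * fibre_weight tau b T) =
      (\<Sum>b | is_branch b \<and> nverts b \<le> n. if b = prune T then tau (prune T) * pruned_weight tau T else 0)"
    by (rule sum.cong) (auto simp: fibre_weight_def)
  also have "\<dots> = (if is_branch (prune T) \<and> nverts (prune T) \<le> n
      then tau (prune T) * pruned_weight tau T else 0)"
    using finite_branches_le by simp
  also have "\<dots> = tau T"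
    using assms chain_prune[of T] nverts_prune_le[of T] weighted_troupe_prune[of tau T]
    by (auto simp: is_branch_def weighted_troupe_def)
  finally show ?thesis ..
qed

lemma weighted_troupe_weight_gf_nth:
  fixes tau :: "bpt \<Rightarrow> 'a::comm_ring_1"
  assumes "weighted_troupe tau"
  shows "weight_gf tau $ n = (\<Sum>b | is_branch b \<and> nverts b \<le> n.
    tau b * ((fps_X * one_minus_inv (fps_X * weight_gf tau)) ^ nverts b) $ n)"
proof -
  have "weight_gf tau $ n =
      (\<Sum>T | nverts T = n. \<Sum>b | is_branch b \<and> nverts b \<le> n. tau b * fibre_weight tau b T)"
    unfolding weight_gf_nth
    by (intro sum.cong refl weighted_troupe_sum_fibre_weights[OF assms]) simp
  also have "\<dots> = (\<Sum>b | is_branch b \<and> nverts b \<le> n. tau b * weight_gf (fibre_weight tau b) $ n)"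
    by (subst sum.swap) (simp add: sum_distrib_left)
  also have "\<dots> = (\<Sum>b | is_branch b \<and> nverts b \<le> n.
      tau b * ((fps_X * one_minus_inv (fps_X * weight_gf tau)) ^ nverts b) $ n)"
    using assms by (intro sum.cong) (auto simp: is_branch_def weighted_troupe_def
        weight_gf_fibre_weight_chain)
  finally show ?thesis .
qed

lemma branch_gf_nth: "branch_gf tau $ n = omega tau n"
  by (auto simp: branch_gf_def omega_def is_branch_def intro!: sum.neutral)

lemma fps_compose_branch_gf_nth:
  "(branch_gf tau oo U) $ n = (\<Sum>b | is_branch b \<and> nverts b \<le> n. tau b * (U ^ nverts b) $ n)"
proof -
  have "(branch_gf tau oo U) $ n =
      (\<Sum>i = 0..n. \<Sum>b | is_branch b \<and> nverts b = i. tau b * (U ^ nverts b) $ n)"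
    by (simp add: fps_compose_nth branch_gf_nth omega_def sum_distrib_right)
  also have "\<dots> = (\<Sum>i = 0..n. \<Sum>b \<in> {b \<in> {b. is_branch b \<and> nverts b \<le> n}. nverts b = i}.
      tau b * (U ^ nverts b) $ n)"
    by (intro sum.cong) auto
  also have "\<dots> = (\<Sum>b | is_branch b \<and> nverts b \<le> n. tau b * (U ^ nverts b) $ n)"
    by (rule sum.group) (auto simp: finite_branches_le)
  finally show ?thesis .
qed

lemma tree_gf_eq_weight_gf: "tau Leaf = 0 \<Longrightarrow> tree_gf tau = weight_gf tau"
  by (intro fps_ext) (simp add: tree_gf_def omega_check_def)

theorem theorem5p1:
  fixes tau :: "bpt \<Rightarrow> 'a::comm_ring_1"
  assumes "weighted_troupe tau"
  shows "tree_gf tau =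
    fps_compose (branch_gf tau) (fps_X * one_minus_inv (fps_X * tree_gf tau))"
proof -
  have "tree_gf tau = weight_gf tau"
    using assms by (simp add: tree_gf_eq_weight_gf weighted_troupe_def)
  moreover have "weight_gf tau $ n =
      (branch_gf tau oo fps_X * one_minus_inv (fps_X * weight_gf tau)) $ n" for n
    unfolding fps_compose_branch_gf_nth by (rule weighted_troupe_weight_gf_nth[OF assms])
  ultimately show ?thesis
    by (metis fps_ext)
qed

end
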